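(* Consider the scoring two-player Tower of Hanoi game on three pegs with real weights $w_{12},w_{13},w_{23}$. (a) Let $n=2$. Consider the inequalities (1) $w_{12}+w_{23}-w_{13}>0$; (2) $3w_{13}-w_{12}-w_{23}>0$; (3) $w_{13}+w_{23}-w_{12}>0$; (4) $3w_{12}-w_{13}-w_{23}>0$; (5) $w_{12}+w_{13}-w_{23}>0$. Under (EC4) or (EC5), the first player wins if at least one of (1)–(5) holds. Under (EC2) or (EC3), the first player wins if (5) holds. Under (EC1) with final peg Peg 3, the first player wins if (1) or (2) holds. In all other cases the game is a draw. (b) Let $n=1$ (so (EC2), (EC3) are not applicable). Under (EC1) with final peg Peg 3, the first player wins if $w_{13}>0$, loses if $w_{13}<0$, and the game is a tie if $w_{13}=0$. Under (EC4) or (EC5), the second player wins if $w_{12}<0$ and $w_{13}<0$; the game is a tie if at least one of $w_{12},w_{13}$ equals $0$ and both are non-positive; otherwise the first player wins.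
   Context: Tower of Hanoi on three pegs (labeled 1, 2, 3) with $n$ disks of pairwise distinct sizes: a position assigns each disk to a peg, disks on each peg stacked with sizes decreasing from bottom to top. A legal move transfers the top disk of one peg to a different peg that is empty or has a larger top disk; a move from Peg $i$ to Peg $j$ or from Peg $j$ to Peg $i$ is a move along edge $\{i,j\}$. A tower position is one with all disks on one peg. Two-player game: Anh (first player) and Bao (second player) alternate moves starting from the position with all disks on Peg 1; a player may not move the disk that the opponent moved in the immediately preceding move. The game ends when the tower has been transferred to a final peg, according to one fixed ending condition: (EC1) all disks on a given peg distinct from Peg 1; (EC2) all disks on Peg 1, the largest disk having been moved at least once; (EC3) all disks on Peg 1, the smallest disk having been moved at least once; (EC4) all disks on any peg, the largest disk having been moved at least once; (EC5) all disks on any peg, the smallest disk having been moved at least once. A move creating a tower position that does not end the game (tower on a non-final peg) is not allowed; (EC2), (EC3) are not applicable for $n=1$. Scoring play: real weights $w_{12},w_{13},w_{23}$ are given (with $w_{ij}=w_{ji}$); a player making a move along edge $\{i,j\}$ earns $w_{ij}$ points. When the game ends, the player with strictly more points wins, and equal points is a tie. A player "wins" the game if she/he has a strategy forcing the game to end with her/his victory; if neither player can force the game to terminate in a victory for her/himself, the game is a draw. *)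

theory Defs
  imports Main "HOL.Real"
begin

text \<open>Disks are 0,...,n-1; disk d has size d (disk 0 smallest, disk n-1 largest).
  Pegs are 1, 2, 3. A configuration assigns to each disk its peg (only disks below n matter);
  the stacking order on each peg is forced by the sizes.\<close>

datatype ending = EC1 nat | EC2 | EC3 | EC4 | EC5

text \<open>Game state: configuration, disk moved in the immediately preceding move,
  whose turn (True = Anh, the first player), score difference (Anh's points minus Bao's),
  whether the largest disk has been moved, whether the smallest disk has been moved.\<close>
datatype state = St (conf: "nat \<Rightarrow> nat") (lastd: "nat option") (aturn: bool)
  (dif: real) (bigm: bool) (smallm: bool)

definition wt :: "real \<Rightarrow> real \<Rightarrow> real \<Rightarrow> nat \<Rightarrow> nat \<Rightarrow> real" where
  "wt w12 w13 w23 i j =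
     (if {i, j} = {1, 2} then w12 else if {i, j} = {1, 3} then w13 else w23)"

definition tower :: "nat \<Rightarrow> (nat \<Rightarrow> nat) \<Rightarrow> nat \<Rightarrow> bool" where
  "tower n c p \<longleftrightarrow> (\<forall>e<n. c e = p)"

text \<open>Hanoi legality of moving disk d to peg q (d is the top disk of its peg, the target peg
  is empty or has a larger top disk, i.e. all smaller disks lie on the third peg), plus the
  rule that the disk moved by the opponent in the preceding move may not be moved.\<close>
definition legal :: "nat \<Rightarrow> state \<Rightarrow> nat \<Rightarrow> nat \<Rightarrow> bool" where
  "legal n s d q \<longleftrightarrow> d < n \<and> q \<in> {1, 2, 3} \<and> q \<noteq> conf s d \<and>
     (\<forall>e<d. conf s e \<noteq> conf s d \<and> conf s e \<noteq> q) \<and> lastd s \<noteq> Some d"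

definition next_state :: "nat \<Rightarrow> (nat \<Rightarrow> nat \<Rightarrow> real) \<Rightarrow> state \<Rightarrow> nat \<Rightarrow> nat \<Rightarrow> state" where
  "next_state n W s d q =
     St ((conf s)(d := q)) (Some d) (\<not> aturn s)
        (dif s + (if aturn s then 1 else -1) * W (conf s d) q)
        (bigm s \<or> d = n - 1) (smallm s \<or> d = 0)"

definition ends :: "ending \<Rightarrow> nat \<Rightarrow> state \<Rightarrow> nat \<Rightarrow> nat \<Rightarrow> bool" where
  "ends ec n s d q \<longleftrightarrow> tower n ((conf s)(d := q)) q \<and>
     (case ec of
        EC1 f \<Rightarrow> q = f
      | EC2 \<Rightarrow> q = 1 \<and> (bigm s \<or> d = n - 1)
      | EC3 \<Rightarrow> q = 1 \<and> (smallm s \<or> d = 0)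
      | EC4 \<Rightarrow> bigm s \<or> d = n - 1
      | EC5 \<Rightarrow> smallm s \<or> d = 0)"

definition allowed :: "ending \<Rightarrow> nat \<Rightarrow> state \<Rightarrow> nat \<Rightarrow> nat \<Rightarrow> bool" where
  "allowed ec n s d q \<longleftrightarrow> legal n s d q \<and>
     (tower n ((conf s)(d := q)) q \<longrightarrow> ends ec n s d q)"

text \<open>forces ec n W P G s: player P (True = Anh, False = Bao) has a strategy from state s
  forcing the game to end (after finitely many moves) with final score difference
  satisfying G.  (Least fixed point = attractor of the reachability game.)\<close>
inductive forces :: "ending \<Rightarrow> nat \<Rightarrow> (nat \<Rightarrow> nat \<Rightarrow> real) \<Rightarrow> bool \<Rightarrow> (real \<Rightarrow> bool) \<Rightarrow> state \<Rightarrow> bool"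
  for ec n W P G where
  own: "aturn s = P \<Longrightarrow> allowed ec n s d q \<Longrightarrow>
        (ends ec n s d q \<and> G (dif (next_state n W s d q))) \<or>
        (\<not> ends ec n s d q \<and> forces ec n W P G (next_state n W s d q)) \<Longrightarrow>
        forces ec n W P G s"
| opp: "aturn s \<noteq> P \<Longrightarrow> (\<exists>d q. allowed ec n s d q) \<Longrightarrow>
        (\<forall>d q. allowed ec n s d q \<longrightarrow>
           (ends ec n s d q \<and> G (dif (next_state n W s d q))) \<or>
           (\<not> ends ec n s d q \<and> forces ec n W P G (next_state n W s d q))) \<Longrightarrow>
        forces ec n W P G s"

definition init :: state where
  "init = St (\<lambda>_. 1) None True 0 False False"

definition anh_wins :: "ending \<Rightarrow> nat \<Rightarrow> (nat \<Rightarrow> nat \<Rightarrow> real) \<Rightarrow> bool" where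
  "anh_wins ec n W \<longleftrightarrow> forces ec n W True (\<lambda>x. x > 0) init"

definition bao_wins :: "ending \<Rightarrow> nat \<Rightarrow> (nat \<Rightarrow> nat \<Rightarrow> real) \<Rightarrow> bool" where
  "bao_wins ec n W \<longleftrightarrow> forces ec n W False (\<lambda>x. x < 0) init"

definition is_draw :: "ending \<Rightarrow> nat \<Rightarrow> (nat \<Rightarrow> nat \<Rightarrow> real) \<Rightarrow> bool" where
  "is_draw ec n W \<longleftrightarrow> \<not> anh_wins ec n W \<and> \<not> bao_wins ec n W"

definition is_tie :: "ending \<Rightarrow> nat \<Rightarrow> (nat \<Rightarrow> nat \<Rightarrow> real) \<Rightarrow> bool" where
  "is_tie ec n W \<longleftrightarrow> forces ec n W True (\<lambda>x. x \<ge> 0) init \<and>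
                      forces ec n W False (\<lambda>x. x \<le> 0) init"

end

(*
  With one disk every move creates a tower, so the game ends with Anh's first move.  With two
  disks, since a player may not move the disk just moved by the opponent, Bao must always move
  the large disk, which has a single legal target, while Anh moves the small disk either onto
  the large one, completing a tower, or to the free peg.  So apart from the choice of the
  direction of play and of the moment of completing a tower on a final peg, the play is forced:
  it runs around a cycle of six positions along which the score is periodic.  Anh wins iff one
  of the finitely many tower-completing moves on the cycle yields a positive score; otherwise
  the game is a draw, since Anh can always avoid ending it and Bao can never end it.
*)
theory Submission
  imports Defs
begin

(* The Suc 0 forms are needed since the simplifier rewrites 1 :: nat to Suc 0. *)
lemma wt_simps [simp]:
  "wt w12 w13 w23 1 2 = w12" "wt w12 w13 w23 2 1 = w12"
  "wt w12 w13 w23 1 3 = w13" "wt w12 w13 w23 3 1 = w13"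
  "wt w12 w13 w23 2 3 = w23" "wt w12 w13 w23 3 2 = w23"
  "wt w12 w13 w23 (Suc 0) 2 = w12" "wt w12 w13 w23 2 (Suc 0) = w12"
  "wt w12 w13 w23 (Suc 0) 3 = w13" "wt w12 w13 w23 3 (Suc 0) = w13"
  by (auto simp: wt_def doubleton_eq_iff)

definition final_peg :: "ending \<Rightarrow> nat \<Rightarrow> bool" where
  "final_peg ec p \<longleftrightarrow> (case ec of EC1 f \<Rightarrow> p = f | EC2 \<Rightarrow> p = 1 | EC3 \<Rightarrow> p = 1 | _ \<Rightarrow> True)"

lemma ends_iff_final_peg:
  assumes "bigm s \<or> d = n - 1" "smallm s \<or> d = 0"
  shows "ends ec n s d q \<longleftrightarrow> tower n ((conf s)(d := q)) q \<and> final_peg ec q"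
  using assms by (cases ec) (auto simp: ends_def final_peg_def)

lemma forces_by_ending_move:
  "aturn s = P \<Longrightarrow> allowed ec n s d q \<Longrightarrow> ends ec n s d q \<Longrightarrow>
   G (dif (next_state n W s d q)) \<Longrightarrow> forces ec n W P G s"
  by (rule forces.own) auto

lemma forces_by_forced_reply:
  assumes "aturn s = P" "allowed ec n s d q" "\<not> ends ec n s d q"
    and "t = next_state n W s d q" "allowed ec n t d' q'"
    and "\<And>e r. allowed ec n t e r \<Longrightarrow> e = d' \<and> r = q'" "\<not> ends ec n t d' q'"
    and "forces ec n W P G (next_state n W t d' q')"
  shows "forces ec n W P G s"
proof -
  have "aturn t \<noteq> P" using assms(1,4) by (simp add: next_state_def)
  then have "forces ec n W P G t"
    using assms(5-8) by (intro forces.opp) blast+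
  then show ?thesis using assms(1-4) by (intro forces.own) auto
qed

lemma not_forces_from_trap:
  assumes "I s"
    and own_moves: "\<And>s d q. I s \<Longrightarrow> aturn s = P \<Longrightarrow> allowed ec n s d q \<Longrightarrow>
      if ends ec n s d q then \<not> G (dif (next_state n W s d q)) else I (next_state n W s d q)"
    and opponent_escapes: "\<And>s. I s \<Longrightarrow> aturn s \<noteq> P \<Longrightarrow> \<exists>d q. allowed ec n s d q \<and>
      (if ends ec n s d q then \<not> G (dif (next_state n W s d q)) else I (next_state n W s d q))"
  shows "\<not> forces ec n W P G s"
proof
  assume "forces ec n W P G s"
  then show False using \<open>I s\<close>
  proof (induction rule: forces.induct)
    case (own s d q)
    then show ?case using own_moves[of s d q] by (auto split: if_splits)
  next
    case (opp s)
    then show ?case using opponent_escapes[of s] by (auto split: if_splits)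
  qed
qed

section \<open>One disk\<close>

lemma aturn_init: "aturn init"
  by (simp add: init_def)

lemma init_moves_1:
  "allowed ec 1 init d q \<longleftrightarrow> d = 0 \<and> q \<in> {2, 3} \<and> final_peg ec q"
  "allowed ec 1 init d q \<Longrightarrow> ends ec 1 init d q"
  "dif (next_state 1 W init d q) = W 1 q"
  by (auto simp: allowed_def legal_def ends_iff_final_peg tower_def init_def next_state_def
      final_peg_def split: ending.splits)

lemma anh_forces_1_iff:
  "forces ec 1 W True G init \<longleftrightarrow> (\<exists>q \<in> {2, 3}. final_peg ec q \<and> G (W 1 q))"
proof
  assume "forces ec 1 W True G init"
  then obtain d q where "allowed ec 1 init d q" "G (dif (next_state 1 W init d q))"
    by (cases rule: forces.cases) (use aturn_init init_moves_1(2) in blast)+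
  then show "\<exists>q \<in> {2, 3}. final_peg ec q \<and> G (W 1 q)"
    using init_moves_1(1,3) by metis
next
  assume "\<exists>q \<in> {2, 3}. final_peg ec q \<and> G (W 1 q)"
  then obtain q where "allowed ec 1 init 0 q" "G (dif (next_state 1 W init 0 q))"
    using init_moves_1(1,3) by metis
  then show "forces ec 1 W True G init"
    using forces_by_ending_move aturn_init init_moves_1(2) by metis
qed

lemma bao_forces_1_iff:
  "forces ec 1 W False G init \<longleftrightarrow>
    (\<exists>q \<in> {2, 3}. final_peg ec q) \<and> (\<forall>q \<in> {2, 3}. final_peg ec q \<longrightarrow> G (W 1 q))"
  (is "?forces \<longleftrightarrow> ?some_move \<and> ?all_good")
proof
  assume ?forces
  then have "(\<exists>d q. allowed ec 1 init d q) \<and>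
    (\<forall>d q. allowed ec 1 init d q \<longrightarrow> G (dif (next_state 1 W init d q)))"
    by (cases rule: forces.cases) (use aturn_init init_moves_1(2) in blast)+
  then show "?some_move \<and> ?all_good"
    using init_moves_1(1,3) by metis
next
  assume "?some_move \<and> ?all_good"
  then show ?forces
    using init_moves_1 by (intro forces.opp) (simp_all add: aturn_init, metis+)
qed

section \<open>Two disks\<close>

lemma tower_2: "tower 2 c p \<longleftrightarrow> c 0 = p \<and> c 1 = p"
  by (auto simp: tower_def less_2_cases_iff)

(* The large disk may still be unmoved when Bao is to move for the first time. *)
definition midgame :: "nat \<Rightarrow> nat \<Rightarrow> bool \<Rightarrow> real \<Rightarrow> state \<Rightarrow> bool" where
  "midgame x y t D s \<longleftrightarrow> conf s 0 = x \<and> conf s 1 = y \<and> aturn s = t \<and> dif s = D \<and>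
     lastd s = Some (if t then 1 else 0) \<and> smallm s \<and> (t \<longrightarrow> bigm s)"

lemma init_moves_2:
  "allowed ec 2 init d q \<longleftrightarrow> d = 0 \<and> (q = 2 \<or> q = 3)"
  "q \<noteq> 1 \<Longrightarrow> \<not> ends ec 2 init 0 q"
  "midgame q 1 False (W 1 q) (next_state 2 W init 0 q)"
  by (auto simp: allowed_def legal_def ends_def tower_2 init_def next_state_def midgame_def
      less_2_cases_iff)

lemma anh_moves_2:
  assumes "midgame x y True D s" "x \<in> {1, 2, 3}" "y \<in> {1, 2, 3}" "x \<noteq> y"
  shows "allowed ec 2 s d q \<longleftrightarrow> d = 0 \<and> (q = 6 - x - y \<or> q = y \<and> final_peg ec y)"
    and "ends ec 2 s 0 q \<longleftrightarrow> q = y \<and> final_peg ec y"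
    and "midgame q y False (D + W x q) (next_state 2 W s 0 q)"
proof -
  have both_moved: "bigm s" "smallm s" using assms(1) by (auto simp: midgame_def)
  show ends: "ends ec 2 s 0 q \<longleftrightarrow> q = y \<and> final_peg ec y"
    using assms by (auto simp: ends_iff_final_peg both_moved tower_2 midgame_def)
  show "allowed ec 2 s d q \<longleftrightarrow> d = 0 \<and> (q = 6 - x - y \<or> q = y \<and> final_peg ec y)"
    using assms by (auto simp: allowed_def legal_def ends tower_2 midgame_def less_2_cases_iff)
  show "midgame q y False (D + W x q) (next_state 2 W s 0 q)"
    using assms by (auto simp: midgame_def next_state_def)
qed

lemma bao_moves_2:
  assumes "midgame z y False E s" "z \<in> {1, 2, 3}" "y \<in> {1, 2, 3}" "z \<noteq> y"
  shows "allowed ec 2 s d q \<longleftrightarrow> d = 1 \<and> q = 6 - z - y"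
    and "q \<noteq> z \<Longrightarrow> \<not> ends ec 2 s 1 q"
    and "midgame z q True (E - W y q) (next_state 2 W s 1 q)"
  using assms by (auto simp: allowed_def legal_def ends_def tower_2 midgame_def next_state_def
      less_2_cases_iff)

(* Triples (peg of the small disk, peg of the large disk, score) with Anh to move.  Anh's first
   move to peg 2 (resp. 3) enters the first (resp. second) line; a round, Anh's move to the free
   peg and Bao's forced reply, advances one entry cyclically within a line, and after three
   rounds the score is back where it was, as both players crossed each edge once. *)
definition anh_positions :: "real \<Rightarrow> real \<Rightarrow> real \<Rightarrow> (nat \<times> nat \<times> real) set" where
  "anh_positions w12 w13 w23 =
     {(2, 3, w12 - w13), (1, 2, 2 * w12 - w13 - w23), (3, 1, w12 - w23),
      (3, 2, w13 - w12), (1, 3, 2 * w13 - w12 - w23), (2, 1, w13 - w23)}"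

definition bao_positions :: "real \<Rightarrow> real \<Rightarrow> real \<Rightarrow> (nat \<times> nat \<times> real) set" where
  "bao_positions w12 w13 w23 =
     {(2, 1, w12), (1, 3, 2 * w12 - w13), (3, 2, 2 * w12 - w23),
      (3, 1, w13), (1, 2, 2 * w13 - w12), (2, 3, 2 * w13 - w23)}"

lemma pegs_of_positions:
  assumes "(x, y, D) \<in> anh_positions w12 w13 w23 \<union> bao_positions w12 w13 w23"
  shows "x \<in> {1, 2, 3}" "y \<in> {1, 2, 3}" "x \<noteq> y"
  using assms by (auto simp: anh_positions_def bao_positions_def)

lemma first_move_in_bao_positions:
  "q \<in> {2, 3} \<Longrightarrow> (q, 1, wt w12 w13 w23 1 q) \<in> bao_positions w12 w13 w23"
  by (auto simp: bao_positions_def)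

lemma anh_move_in_bao_positions:
  "(x, y, D) \<in> anh_positions w12 w13 w23 \<Longrightarrow>
   (6 - x - y, y, D + wt w12 w13 w23 x (6 - x - y)) \<in> bao_positions w12 w13 w23"
  unfolding anh_positions_def bao_positions_def by (elim insertE emptyE) simp_all

lemma bao_move_in_anh_positions:
  "(z, y, E) \<in> bao_positions w12 w13 w23 \<Longrightarrow>
   (z, 6 - z - y, E - wt w12 w13 w23 y (6 - z - y)) \<in> anh_positions w12 w13 w23"
  unfolding anh_positions_def bao_positions_def by (elim insertE emptyE) simp_all

definition on_cycle :: "real \<Rightarrow> real \<Rightarrow> real \<Rightarrow> state \<Rightarrow> bool" where
  "on_cycle w12 w13 w23 s \<longleftrightarrow> s = init \<or>
     (\<exists>(x, y, D) \<in> anh_positions w12 w13 w23. midgame x y True D s) \<or>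
     (\<exists>(x, y, D) \<in> bao_positions w12 w13 w23. midgame x y False D s)"

lemma on_cycle_anh_turn:
  "(x, y, D) \<in> anh_positions w12 w13 w23 \<Longrightarrow> midgame x y True D s \<Longrightarrow> on_cycle w12 w13 w23 s"
  unfolding on_cycle_def by blast

lemma on_cycle_bao_turn:
  "(z, y, E) \<in> bao_positions w12 w13 w23 \<Longrightarrow> midgame z y False E s \<Longrightarrow> on_cycle w12 w13 w23 s"
  unfolding on_cycle_def by blast

lemma on_cycle_cases:
  assumes "on_cycle w12 w13 w23 s"
  obtains "s = init"
  | x y D where "(x, y, D) \<in> anh_positions w12 w13 w23" "midgame x y True D s"
  | z y E where "(z, y, E) \<in> bao_positions w12 w13 w23" "midgame z y False E s"
  using assms unfolding on_cycle_def by blast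

lemma on_cycle_bao_moves:
  assumes "on_cycle w12 w13 w23 s" "\<not> aturn s"
  shows "\<exists>d q. allowed ec 2 s d q"
    and "allowed ec 2 s d q \<Longrightarrow>
      \<not> ends ec 2 s d q \<and> on_cycle w12 w13 w23 (next_state 2 (wt w12 w13 w23) s d q)"
proof -
  obtain z y E where pos: "(z, y, E) \<in> bao_positions w12 w13 w23" and s: "midgame z y False E s"
    using assms by (cases rule: on_cycle_cases) (auto simp: init_def midgame_def)
  have pegs: "z \<in> {1, 2, 3}" "y \<in> {1, 2, 3}" "z \<noteq> y"
    using pegs_of_positions pos by blast+
  note moves = bao_moves_2[OF s pegs]
  show "\<exists>d q. allowed ec 2 s d q"
    using moves(1) by blast
  assume "allowed ec 2 s d q"
  then have move: "d = 1" "q = 6 - z - y" using moves(1) by blast+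
  moreover have "q \<noteq> z" using pegs move(2) by auto
  ultimately show "\<not> ends ec 2 s d q \<and> on_cycle w12 w13 w23 (next_state 2 (wt w12 w13 w23) s d q)"
    using moves(2,3) on_cycle_anh_turn[OF bao_move_in_anh_positions[OF pos]] by simp
qed

lemma on_cycle_anh_continues:
  assumes "on_cycle w12 w13 w23 s" "aturn s"
  shows "\<exists>q. allowed ec 2 s 0 q \<and> \<not> ends ec 2 s 0 q \<and>
    on_cycle w12 w13 w23 (next_state 2 (wt w12 w13 w23) s 0 q)"
  using assms
proof (cases rule: on_cycle_cases)
  case 1
  have "(2, 1, wt w12 w13 w23 1 2) \<in> bao_positions w12 w13 w23"
    by (rule first_move_in_bao_positions) simp
  then have "on_cycle w12 w13 w23 (next_state 2 (wt w12 w13 w23) init 0 2)"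
    using init_moves_2(3) by (rule on_cycle_bao_turn)
  then show ?thesis using 1 init_moves_2(1,2) by auto
next
  case (2 x y D)
  have pegs: "x \<in> {1, 2, 3}" "y \<in> {1, 2, 3}" "x \<noteq> y"
    using pegs_of_positions 2(1) by blast+
  then have "6 - x - y \<noteq> y" by auto
  then have "allowed ec 2 s 0 (6 - x - y) \<and> \<not> ends ec 2 s 0 (6 - x - y) \<and>
    on_cycle w12 w13 w23 (next_state 2 (wt w12 w13 w23) s 0 (6 - x - y))"
    using anh_moves_2[OF 2(2) pegs] on_cycle_bao_turn[OF anh_move_in_bao_positions[OF 2(1)]]
    by simp
  then show ?thesis ..
qed (auto simp: midgame_def)

lemma on_cycle_anh_moves:
  assumes "on_cycle w12 w13 w23 s" "aturn s" "allowed ec 2 s d q"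
  shows "if ends ec 2 s d q
    then \<exists>(x, y, D) \<in> anh_positions w12 w13 w23.
      final_peg ec y \<and> dif (next_state 2 (wt w12 w13 w23) s d q) = D + wt w12 w13 w23 x y
    else on_cycle w12 w13 w23 (next_state 2 (wt w12 w13 w23) s d q)"
  using assms(1)
proof (cases rule: on_cycle_cases)
  case 1
  then have "d = 0" "q \<in> {2, 3}" using assms(3) init_moves_2(1) by auto
  then show ?thesis
    using 1 init_moves_2(2,3) on_cycle_bao_turn[OF first_move_in_bao_positions] by auto
next
  case (2 x y D)
  have pegs: "x \<in> {1, 2, 3}" "y \<in> {1, 2, 3}" "x \<noteq> y"
    using pegs_of_positions 2(1) by blast+
  note moves = anh_moves_2[OF 2(2) pegs]
  show ?thesis
  proof (cases "q = y")
    case True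
    moreover have "6 - x - y \<noteq> y" using pegs by auto
    ultimately have "d = 0" "final_peg ec y" using assms(3) moves(1) by auto
    moreover have "dif (next_state 2 (wt w12 w13 w23) s 0 y) = D + wt w12 w13 w23 x y"
      using moves(3) by (simp add: midgame_def)
    ultimately show ?thesis
      using True moves(2) 2(1) by auto
  next
    case False
    then have "d = 0" "q = 6 - x - y" "\<not> ends ec 2 s d q" using assms(3) moves(1,2) by auto
    then show ?thesis
      using moves(3) on_cycle_bao_turn[OF anh_move_in_bao_positions[OF 2(1)]] by simp
  qed
next
  case 3
  then show ?thesis using assms(2) by (simp add: midgame_def)
qed

lemma init_on_cycle: "on_cycle w12 w13 w23 init"
  by (simp add: on_cycle_def)

lemma bao_cannot_force_2: "\<not> forces ec 2 (wt w12 w13 w23) False G init"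
proof (rule not_forces_from_trap[where I = "on_cycle w12 w13 w23", OF init_on_cycle])
  fix s d q
  assume "on_cycle w12 w13 w23 s" "aturn s = False" "allowed ec 2 s d q"
  then show "if ends ec 2 s d q then \<not> G (dif (next_state 2 (wt w12 w13 w23) s d q))
    else on_cycle w12 w13 w23 (next_state 2 (wt w12 w13 w23) s d q)"
    using on_cycle_bao_moves(2) by simp
next
  fix s
  assume "on_cycle w12 w13 w23 s" "aturn s \<noteq> False"
  then show "\<exists>d q. allowed ec 2 s d q \<and>
    (if ends ec 2 s d q then \<not> G (dif (next_state 2 (wt w12 w13 w23) s d q))
     else on_cycle w12 w13 w23 (next_state 2 (wt w12 w13 w23) s d q))"
    using on_cycle_anh_continues by fastforce
qed

lemma anh_cannot_win_2:
  assumes "\<forall>(x, y, D) \<in> anh_positions w12 w13 w23. final_peg ec y \<longrightarrow> D + wt w12 w13 w23 x y \<le> 0"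
  shows "\<not> forces ec 2 (wt w12 w13 w23) True (\<lambda>v. v > 0) init"
proof (rule not_forces_from_trap[where I = "on_cycle w12 w13 w23", OF init_on_cycle])
  fix s d q
  assume "on_cycle w12 w13 w23 s" "aturn s = True" "allowed ec 2 s d q"
  then show "if ends ec 2 s d q then \<not> dif (next_state 2 (wt w12 w13 w23) s d q) > 0
    else on_cycle w12 w13 w23 (next_state 2 (wt w12 w13 w23) s d q)"
    using on_cycle_anh_moves[of w12 w13 w23 s ec d q] assms by (auto split: if_splits)
next
  fix s
  assume "on_cycle w12 w13 w23 s" "aturn s \<noteq> True"
  then show "\<exists>d q. allowed ec 2 s d q \<and>
    (if ends ec 2 s d q then \<not> dif (next_state 2 (wt w12 w13 w23) s d q) > 0
     else on_cycle w12 w13 w23 (next_state 2 (wt w12 w13 w23) s d q))"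
    using on_cycle_bao_moves by fastforce
qed

lemma forces_by_finishing_2:
  assumes "midgame x y True D s" "x \<in> {1, 2, 3}" "y \<in> {1, 2, 3}" "x \<noteq> y"
    and "final_peg ec y" "G (D + W x y)"
  shows "forces ec 2 W True G s"
proof (rule forces_by_ending_move)
  note moves = anh_moves_2[OF assms(1-4)]
  show "aturn s = True" using assms(1) by (simp add: midgame_def)
  show "allowed ec 2 s 0 y" "ends ec 2 s 0 y" using moves(1,2) assms(5) by auto
  show "G (dif (next_state 2 W s 0 y))" using moves(3) assms(6) by (simp add: midgame_def)
qed

lemma forces_by_round_2:
  assumes "midgame x y True D s" "x \<in> {1, 2, 3}" "y \<in> {1, 2, 3}" "x \<noteq> y"
    and "\<And>s'. midgame (6 - x - y) x True (D + W x (6 - x - y) - W y x) s' \<Longrightarrow> forces ec 2 W True G s'"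
  shows "forces ec 2 W True G s"
proof -
  define z where "z = 6 - x - y"
  have pegs: "z \<in> {1, 2, 3}" "z \<noteq> x" "z \<noteq> y" "6 - z - y = x"
    using assms(2-4) by (auto simp: z_def)
  note moves = anh_moves_2[OF assms(1-4)]
  have t: "midgame z y False (D + W x z) (next_state 2 W s 0 z)"
    using moves(3) .
  note replies = bao_moves_2[OF t pegs(1) assms(3) pegs(3), unfolded pegs(4)]
  show ?thesis
  proof (rule forces_by_forced_reply[OF _ _ _ refl])
    show "aturn s = True" using assms(1) by (simp add: midgame_def)
    show "allowed ec 2 s 0 z" "\<not> ends ec 2 s 0 z" using moves(1,2) pegs by (auto simp: z_def)
    show "allowed ec 2 (next_state 2 W s 0 z) 1 x" "\<not> ends ec 2 (next_state 2 W s 0 z) 1 x"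
      "\<And>e r. allowed ec 2 (next_state 2 W s 0 z) e r \<Longrightarrow> e = 1 \<and> r = x"
      using replies(1,2) pegs by auto
    show "forces ec 2 W True G (next_state 2 W (next_state 2 W s 0 z) 1 x)"
      using assms(5) replies(3) by (simp add: z_def)
  qed
qed

lemma forces_by_first_round_2:
  assumes "q \<in> {2, 3}"
    and "\<And>s. midgame q (5 - q) True (W 1 q - W 1 (5 - q)) s \<Longrightarrow> forces ec 2 W True G s"
  shows "forces ec 2 W True G init"
proof -
  have pegs: "q \<in> {1, 2, 3}" "(1::nat) \<in> {1, 2, 3}" "q \<noteq> 1" "6 - q - 1 = 5 - q" "5 - q \<noteq> q"
    using assms(1) by auto
  note replies = bao_moves_2[OF init_moves_2(3) pegs(1-3), unfolded pegs(4)]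
  show ?thesis
  proof (rule forces_by_forced_reply[OF _ _ _ refl])
    show "aturn init = True" by (simp add: init_def)
    show "allowed ec 2 init 0 q" "\<not> ends ec 2 init 0 q" using init_moves_2(1,2) assms(1) by auto
    show "allowed ec 2 (next_state 2 W init 0 q) 1 (5 - q)"
      "\<not> ends ec 2 (next_state 2 W init 0 q) 1 (5 - q)"
      "\<And>e r. allowed ec 2 (next_state 2 W init 0 q) e r \<Longrightarrow> e = 1 \<and> r = 5 - q"
      using replies(1,2) pegs(5) by auto
    show "forces ec 2 W True G (next_state 2 W (next_state 2 W init 0 q) 1 (5 - q))"
      using assms(2) replies(3) by simp
  qed
qed

lemma forces_by_reaching_position_2:
  assumes "(x, y, D) \<in> anh_positions w12 w13 w23"
    and "\<And>s. midgame x y True D s \<Longrightarrow> forces ec 2 (wt w12 w13 w23) True G s"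
  shows "forces ec 2 (wt w12 w13 w23) True G init"
proof -
  define reached where
    "reached x y D \<longleftrightarrow> (\<forall>s. midgame x y True D s \<longrightarrow> forces ec 2 (wt w12 w13 w23) True G s)"
    for x y D
  have first: "reached q (5 - q) (wt w12 w13 w23 1 q - wt w12 w13 w23 1 (5 - q)) \<Longrightarrow> ?thesis"
    if "q \<in> {2, 3}" for q
    using forces_by_first_round_2[OF that] by (simp add: reached_def)
  have round: "reached (6 - x - y) x D' \<Longrightarrow> reached x y D"
    if "x \<in> {1, 2, 3}" "y \<in> {1, 2, 3}" "x \<noteq> y"
      "D' = D + wt w12 w13 w23 x (6 - x - y) - wt w12 w13 w23 y x" for x y D D'
    using forces_by_round_2[OF _ that(1-3)] that(4) by (simp add: reached_def)
  have "reached 2 3 (w12 - w13) \<Longrightarrow> ?thesis"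
    using first[of 2] by simp
  moreover have "reached 1 2 (2 * w12 - w13 - w23) \<Longrightarrow> reached 2 3 (w12 - w13)"
    by (rule round) auto
  moreover have "reached 3 1 (w12 - w23) \<Longrightarrow> reached 1 2 (2 * w12 - w13 - w23)"
    by (rule round) auto
  moreover have "reached 3 2 (w13 - w12) \<Longrightarrow> ?thesis"
    using first[of 3] by simp
  moreover have "reached 1 3 (2 * w13 - w12 - w23) \<Longrightarrow> reached 3 2 (w13 - w12)"
    by (rule round) auto
  moreover have "reached 2 1 (w13 - w23) \<Longrightarrow> reached 1 3 (2 * w13 - w12 - w23)"
    by (rule round) auto
  moreover have "reached x y D"
    using assms(2) by (simp add: reached_def)
  moreover have "(x, y, D) = (2, 3, w12 - w13) \<or> (x, y, D) = (1, 2, 2 * w12 - w13 - w23) \<or>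
      (x, y, D) = (3, 1, w12 - w23) \<or> (x, y, D) = (3, 2, w13 - w12) \<or>
      (x, y, D) = (1, 3, 2 * w13 - w12 - w23) \<or> (x, y, D) = (2, 1, w13 - w23)"
    using assms(1) unfolding anh_positions_def by blast
  ultimately show ?thesis by blast
qed

lemma anh_wins_2_iff:
  "anh_wins ec 2 (wt w12 w13 w23) \<longleftrightarrow>
    (\<exists>(x, y, D) \<in> anh_positions w12 w13 w23. final_peg ec y \<and> D + wt w12 w13 w23 x y > 0)"
proof
  assume "anh_wins ec 2 (wt w12 w13 w23)"
  then show "\<exists>(x, y, D) \<in> anh_positions w12 w13 w23. final_peg ec y \<and> D + wt w12 w13 w23 x y > 0"
    using anh_cannot_win_2 unfolding anh_wins_def by fastforce
next
  assume "\<exists>(x, y, D) \<in> anh_positions w12 w13 w23. final_peg ec y \<and> D + wt w12 w13 w23 x y > 0"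
  then obtain x y D where pos: "(x, y, D) \<in> anh_positions w12 w13 w23"
    and win: "final_peg ec y" "D + wt w12 w13 w23 x y > 0" by blast
  have pegs: "x \<in> {1, 2, 3}" "y \<in> {1, 2, 3}" "x \<noteq> y"
    using pegs_of_positions pos by blast+
  show "anh_wins ec 2 (wt w12 w13 w23)"
    unfolding anh_wins_def
    using forces_by_reaching_position_2[OF pos] forces_by_finishing_2[OF _ pegs win(1)] win(2)
    by blast
qed

lemma is_draw_2_iff:
  "is_draw ec 2 (wt w12 w13 w23) \<longleftrightarrow>
    \<not> (\<exists>(x, y, D) \<in> anh_positions w12 w13 w23. final_peg ec y \<and> D + wt w12 w13 w23 x y > 0)"
  using anh_wins_2_iff bao_cannot_force_2 by (simp add: is_draw_def bao_wins_def)

definition winning_finish :: "ending \<Rightarrow> real \<Rightarrow> real \<Rightarrow> real \<Rightarrow> bool" where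
  "winning_finish ec w12 w13 w23 \<longleftrightarrow>
     final_peg ec 3 \<and> (w12 + w23 - w13 > 0 \<or> 3 * w13 - w12 - w23 > 0) \<or>
     final_peg ec 2 \<and> (3 * w12 - w13 - w23 > 0 \<or> w13 + w23 - w12 > 0) \<or>
     final_peg ec 1 \<and> w12 + w13 - w23 > 0"

lemma winning_finish_iff:
  "(\<exists>(x, y, D) \<in> anh_positions w12 w13 w23. final_peg ec y \<and> D + wt w12 w13 w23 x y > 0) \<longleftrightarrow>
    winning_finish ec w12 w13 w23"
  unfolding anh_positions_def winning_finish_def by auto

theorem theorem3:
  fixes w12 w13 w23 :: real
  defines "W \<equiv> wt w12 w13 w23"
  shows
  \<comment> \<open>(a) n = 2\<close>
  "(\<forall>ec \<in> {EC4, EC5}.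
      (w12 + w23 - w13 > 0 \<or> 3 * w13 - w12 - w23 > 0 \<or> w13 + w23 - w12 > 0 \<or>
       3 * w12 - w13 - w23 > 0 \<or> w12 + w13 - w23 > 0 \<longrightarrow> anh_wins ec 2 W) \<and>
      (\<not> (w12 + w23 - w13 > 0 \<or> 3 * w13 - w12 - w23 > 0 \<or> w13 + w23 - w12 > 0 \<or>
          3 * w12 - w13 - w23 > 0 \<or> w12 + w13 - w23 > 0) \<longrightarrow> is_draw ec 2 W))
   \<and> (\<forall>ec \<in> {EC2, EC3}.
      (w12 + w13 - w23 > 0 \<longrightarrow> anh_wins ec 2 W) \<and>
      (\<not> (w12 + w13 - w23 > 0) \<longrightarrow> is_draw ec 2 W))
   \<and> ((w12 + w23 - w13 > 0 \<or> 3 * w13 - w12 - w23 > 0 \<longrightarrow> anh_wins (EC1 3) 2 W) \<and>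
      (\<not> (w12 + w23 - w13 > 0 \<or> 3 * w13 - w12 - w23 > 0) \<longrightarrow> is_draw (EC1 3) 2 W))
   \<comment> \<open>(b) n = 1\<close>
   \<and> ((w13 > 0 \<longrightarrow> anh_wins (EC1 3) 1 W) \<and>
      (w13 < 0 \<longrightarrow> bao_wins (EC1 3) 1 W) \<and>
      (w13 = 0 \<longrightarrow> is_tie (EC1 3) 1 W))
   \<and> (\<forall>ec \<in> {EC4, EC5}.
      (w12 < 0 \<and> w13 < 0 \<longrightarrow> bao_wins ec 1 W) \<and>
      ((w12 = 0 \<or> w13 = 0) \<and> w12 \<le> 0 \<and> w13 \<le> 0 \<longrightarrow> is_tie ec 1 W) \<and>
      (\<not> (w12 < 0 \<and> w13 < 0) \<and> \<not> ((w12 = 0 \<or> w13 = 0) \<and> w12 \<le> 0 \<and> w13 \<le> 0)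
         \<longrightarrow> anh_wins ec 1 W))"
proof -
  have two_disks:
    "anh_wins ec 2 W \<longleftrightarrow> winning_finish ec w12 w13 w23"
    "is_draw ec 2 W \<longleftrightarrow> \<not> winning_finish ec w12 w13 w23" for ec
    using anh_wins_2_iff is_draw_2_iff unfolding W_def winning_finish_iff by blast+
  show ?thesis
    unfolding two_disks unfolding anh_wins_def bao_wins_def is_tie_def anh_forces_1_iff bao_forces_1_iff
    by (auto simp: W_def winning_finish_def final_peg_def)
qed

end
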